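(* For all $e,f\in\mathrm{Exp}$, if $e\mathrel{\dot\equiv}f$ then $e\sim f$.
   Context: Fix a finite set $T$ of primitive tests, a set $\mathrm{Act}$ of atomic actions, a set $\mathrm{Out}$ of return values, and a semiring $(S,+,\cdot,0,1)$ that is positive ($x+y=0\Rightarrow x=y=0$), refinement (whenever $x+y=z+w$ there exist $s,t,u,v$ with $s+t=x$, $s+u=z$, $u+v=y$, $t+v=w$) and Conway (with ${}^*:S\to S$ satisfying $(a+b)^*=a^*(ba^* )^*$, $(ab)^*=1+a(ba)^*b$). Tests: $b,c\in\mathrm{BExp}::=\mathtt{0}\mid\mathtt{1}\mid t\ (t\in T)\mid\bar b\mid b+c\mid bc$ ($\mathtt 0,\mathtt 1$ false/true, distinct from semiring $0,1$); $\equiv_{BA}$ is Boolean equivalence; $\mathrm{At}$ is the finite set of atoms of the free Boolean algebra on $T$, atoms also regarded as tests; $\alpha\le b$ means $\alpha$ entails $b$. Expressions: $e,f\in\mathrm{Exp}::= p\in\mathrm{Act}\mid b\in\mathrm{BExp}\mid e+_b f\mid e;f\mid e^{(b)}\mid v\in\mathrm{Out}\mid e\oplus_{r,s} f\ (r,s\in S)$; $\odot r:=\mathtt 1\oplus_{r,0}\mathtt 0$. $\mathcal M_\omega(X)$: finitely supported maps $X\to S$, pointwise operations; $\delta_x$ indicator of $x$; $\nu[A]=\sum_{x\in A}\nu(x)$. A wGKAT automaton is $(X,\beta)$ with $\beta:X\to\mathcal M_\omega(\{\mathsf{acc},\mathsf{rej}\}+\mathrm{Out}+\mathrm{Act}\times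 X)^{\mathrm{At}}$. A map $h:X\to Y$ between automata $(X,\beta),(Y,\gamma)$ is a homomorphism if for all $x,\alpha$: $\gamma(h(x))_\alpha(o)=\beta(x)_\alpha(o)$ for $o\in\{\mathsf{acc},\mathsf{rej}\}+\mathrm{Out}$, and $\gamma(h(x))_\alpha(p,y)=\beta(x)_\alpha[\{p\}\times h^{-1}(y)]$. A relation $R\subseteq X\times Y$ is a bisimulation if there is $\rho:R\to\mathcal M_\omega(\{\mathsf{acc},\mathsf{rej}\}+\mathrm{Out}+\mathrm{Act}\times R)^{\mathrm{At}}$ making both projections homomorphisms from $(R,\rho)$; $e\sim f$ means some bisimulation on $(\mathrm{Exp},\partial)$ contains $(e,f)$. The derivative automaton: $\partial(b)_\alpha=\delta_{\mathsf{acc}}$ if $\alpha\le b$, else $\delta_{\mathsf{rej}}$; $\partial(v)_\alpha=\delta_v$; $\partial(p)_\alpha=\delta_{(p,\mathtt 1)}$; $\partial(e+_bf)_\alpha=\partial(e)_\alpha$ if $\alpha\le b$, else $\partial(f)_\alpha$; $\partial(e\oplus_{r,s}f)_\alpha=r\partial(e)_\alpha+s\partial(f)_\alpha$; $\partial(e;f)_\alpha=\sum_x\partial(e)_\alpha(x)c_{\alpha,f}(x)$ with $c_{\alpha,f}(\mathsf{acc})=\partial(f)_\alpha$, $c_{\alpha,f}(x)=\delta_x$ for $x\in\{\mathsf{rej}\}\cup\mathrm{Out}$, $c_{\alpha,f}(p,e')=\delta_{(p,e';f)}$; $\partial(e^{(b)})_\alpha(x)$ is $1$ if $x=\mathsf{acc}$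 and $\alpha\le\bar b$; $\partial(e)_\alpha(\mathsf{acc})^*\partial(e)_\alpha(x)$ if $x\in\{\mathsf{rej}\}\cup\mathrm{Out}$ and $\alpha\le b$; $\partial(e)_\alpha(\mathsf{acc})^*\partial(e)_\alpha(p,e')$ if $x=(p,e';e^{(b)})$ and $\alpha\le b$; $0$ otherwise. $E:\mathrm{Exp}\to S^{\mathrm{At}}$: $E(p)_\alpha=E(v)_\alpha=0$; $E(b)_\alpha=1$ if $\alpha\le b$ else $0$; $E(e\oplus_{r,s}f)_\alpha=rE(e)_\alpha+sE(f)_\alpha$; $E(e+_bf)_\alpha=E(e)_\alpha$ if $\alpha\le b$ else $E(f)_\alpha$; $E(e;f)_\alpha=E(e)_\alpha E(f)_\alpha$; $E(e^{(b)})_\alpha=E(\bar b)_\alpha$. The relation $\equiv$ is the smallest congruence on $\mathrm{Exp}$ (tests taken up to $\equiv_{BA}$; sequencing binds tighter than $\oplus$, $\odot$ binds tightest) containing, for all $e,f,g\in\mathrm{Exp}$, tests $b,c$, $v\in\mathrm{Out}$, $r,s,t,u\in S$: (G1) $e+_be\equiv e$; (G2) $e+_bf\equiv b;e+_bf$; (G3) $e+_bf\equiv f+_{\bar b}e$; (G4) $(e+_bf)+_cg\equiv e+_{bc}(f+_cg)$; (D1) $e\oplus_{r,s}(f+_bg)\equiv(e\oplus_{r,s}f)+_b(e\oplus_{r,s}g)$; (D2) $e\oplus_{r,s}(f\oplus_{t,u}g)\equiv e\oplus_{r,1}(f\oplus_{st,su}g)$; (D3) $b;(e\oplus_{r,s}f)\equiv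 b;(b;e\oplus_{r,s}b;f)$; (S1) $\mathtt 1;e\equiv e\equiv e;\mathtt 1$; (S2) $(e;f);g\equiv e;(f;g)$; (S3) $\mathtt 0;e\equiv\mathtt 0$; (S4) $(e\oplus_{r,s}f);g\equiv e;g\oplus_{r,s}f;g$; (S5) $(e+_bf);g\equiv e;g+_bf;g$; (S6) $v;e\equiv v$; (S7) $b;c\equiv bc$; (L1) $e^{(b)}\equiv e;e^{(b)}+_b\mathtt 1$; (C1) $\odot1\equiv\mathtt 1$; (C2) $\odot0;e\equiv\odot0$; (W1) $e\oplus_{r,s}e\equiv\odot(r+s);e$; (W2) $e\oplus_{r,s}f\equiv f\oplus_{s,r}e$; (W3) $e\oplus_{r,s}(f\oplus_{t,u}g)\equiv(e\oplus_{r,st}f)\oplus_{1,su}g$; (W4) $e\oplus_{ru,s}f\equiv(\odot u;e)\oplus_{r,s}f$; and closed under the rules (L2) if $e\equiv(f\oplus_{r,s}\mathtt 1)+_cg$ then $c;e^{(b)}\equiv c;((\odot(s^*r);f;e^{(b)})+_b\mathtt 1)$; (F1) if $g\equiv e;g+_bf$ and $E(e)_\alpha=0$ for all $\alpha\in\mathrm{At}$ then $g\equiv e^{(b)};f$. Systems of equations: for a finite set $X$ of indeterminates, a term over $X$ is a generalized guarded sum $\mathrm{GS}_{\alpha\in\mathrm{At}}w_\alpha$ (where $\mathrm{GS}_{\alpha\in\emptyset}:=\mathtt 0$ and $\mathrm{GS}_{\alpha\in\Phi}w_\alpha:=w_\gamma+_\gamma\mathrm{GS}_{\alpha\in\Phi\setminus\{\gamma\}}w_\alpha$)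 of weighted sums $w_\alpha=\bigoplus_{i\in I}r_i\cdot t_i$ (with $I$ finite, $\bigoplus_{i\in I}r_i\cdot t_i:=t_j\oplus_{r_j,1}\bigoplus_{i\in I\setminus\{j\}}r_i\cdot t_i$, empty sum $\odot0$), where each $t_i$ is either an expression $f\in\mathrm{Exp}$ or a formal product $g\,x$ with $g\in\mathrm{Exp}$, $x\in X$. A system is $(X,\tau)$ with $X$ finite and $\tau$ assigning a term to each $x\in X$; it is Salomaa if every $g$ occurring in a subterm $g\,x$ of any $\tau(x)$ satisfies $E(g)_\alpha=0$ for all $\alpha$. For $h:X\to\mathrm{Exp}$, $h^\#$ maps a term to the expression obtained by replacing each $g\,x$ by $g;h(x)$. For a congruence $R$, $h$ is a solution up to $R$ if $(h(x),h^\#(\tau(x)))\in R$ for all $x$. Let $\dot\equiv$ be the least congruence containing $\equiv$ and closed under the rule (UA): if $(X,\tau)$ is a Salomaa system and $f,g:X\to\mathrm{Exp}$ are both solutions of $(X,\tau)$ up to $\dot\equiv$, then $f(x)\mathrel{\dot\equiv}g(x)$ for all $x\in X$. *)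

theory Defs
  imports Main
begin

datatype 't bexp = BZero | BOne | Prim 't | BNot "'t bexp" | BOr "'t bexp" "'t bexp" | BAnd "'t bexp" "'t bexp"

text \<open>Atoms of the free Boolean algebra on the finite set T of primitive tests are
  identified with valuations, i.e. subsets of T (the primitive tests that hold).
  beval a b means that the atom a entails b.\<close>

type_synonym 't atom = "'t set"

primrec beval :: "'t atom \<Rightarrow> 't bexp \<Rightarrow> bool" where
  "beval a BZero = False"
| "beval a BOne = True"
| "beval a (Prim t) = (t \<in> a)"
| "beval a (BNot b) = (\<not> beval a b)"
| "beval a (BOr b c) = (beval a b \<or> beval a c)"
| "beval a (BAnd b c) = (beval a b \<and> beval a c)"

definition ba_equiv :: "'t bexp \<Rightarrow> 't bexp \<Rightarrow> bool" where
  "ba_equiv b c \<longleftrightarrow> (\<forall>a. beval a b = beval a c)"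

definition atom_test :: "'t::finite atom \<Rightarrow> 't bexp" where
  "atom_test a = foldr (\<lambda>t acc. BAnd (if t \<in> a then Prim t else BNot (Prim t)) acc)
                       (SOME xs. set xs = UNIV \<and> distinct xs) BOne"

datatype ('t, 'p, 'v, 's) exp =
    Act 'p
  | Tst "'t bexp"
  | GChoice "('t, 'p, 'v, 's) exp" "'t bexp" "('t, 'p, 'v, 's) exp"
  | Seq "('t, 'p, 'v, 's) exp" "('t, 'p, 'v, 's) exp"
  | Loop "('t, 'p, 'v, 's) exp" "'t bexp"
  | Ret 'v
  | WChoice "('t, 'p, 'v, 's) exp" 's 's "('t, 'p, 'v, 's) exp"

definition odot :: "'s::{semiring_0,monoid_mult} \<Rightarrow> ('t, 'p, 'v, 's) exp" where
  "odot r = WChoice (Tst BOne) r 0 (Tst BZero)"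

datatype ('p, 'v, 'x) outc = Acc | Rej | Rv 'v | Tr 'p 'x

definition fin_supp :: "('a \<Rightarrow> 's::zero) \<Rightarrow> bool" where
  "fin_supp \<nu> \<longleftrightarrow> finite {x. \<nu> x \<noteq> 0}"

definition mass :: "('a \<Rightarrow> 's::comm_monoid_add) \<Rightarrow> 'a set \<Rightarrow> 's" where
  "mass \<nu> A = (\<Sum>x\<in>{x\<in>A. \<nu> x \<noteq> 0}. \<nu> x)"

definition is_automaton ::
  "'x set \<Rightarrow> ('x \<Rightarrow> 't atom \<Rightarrow> ('p, 'v, 'x) outc \<Rightarrow> 's::zero) \<Rightarrow> bool" where
  "is_automaton X \<beta> \<longleftrightarrow>
     (\<forall>x\<in>X. \<forall>a. fin_supp (\<beta> x a) \<and> (\<forall>p y. \<beta> x a (Tr p y) \<noteq> 0 \<longrightarrow> y \<in> X))"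

definition is_hom ::
  "'x set \<Rightarrow> ('x \<Rightarrow> 't atom \<Rightarrow> ('p, 'v, 'x) outc \<Rightarrow> 's::comm_monoid_add)
   \<Rightarrow> 'y set \<Rightarrow> ('y \<Rightarrow> 't atom \<Rightarrow> ('p, 'v, 'y) outc \<Rightarrow> 's) \<Rightarrow> ('x \<Rightarrow> 'y) \<Rightarrow> bool" where
  "is_hom X \<beta> Y \<gamma> h \<longleftrightarrow>
     (\<forall>x\<in>X. h x \<in> Y \<and>
        (\<forall>a. \<gamma> (h x) a Acc = \<beta> x a Acc
           \<and> \<gamma> (h x) a Rej = \<beta> x a Rej
           \<and> (\<forall>v. \<gamma> (h x) a (Rv v) = \<beta> x a (Rv v))
           \<and> (\<forall>p y. y \<in> Y \<longrightarrow>
                 \<gamma> (h x) a (Tr p y) = mass (\<beta> x a) {Tr p x' | x'. x' \<in> X \<and> h x' = y})))"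

definition is_bisim ::
  "'x set \<Rightarrow> ('x \<Rightarrow> 't atom \<Rightarrow> ('p, 'v, 'x) outc \<Rightarrow> 's::comm_monoid_add)
   \<Rightarrow> 'y set \<Rightarrow> ('y \<Rightarrow> 't atom \<Rightarrow> ('p, 'v, 'y) outc \<Rightarrow> 's) \<Rightarrow> ('x \<times> 'y) set \<Rightarrow> bool" where
  "is_bisim X \<beta> Y \<gamma> R \<longleftrightarrow> R \<subseteq> X \<times> Y \<and>
     (\<exists>\<rho>. is_automaton R \<rho> \<and> is_hom R \<rho> X \<beta> fst \<and> is_hom R \<rho> Y \<gamma> snd)"

primrec der :: "('s::{semiring_0,monoid_mult} \<Rightarrow> 's) \<Rightarrow> ('t, 'p, 'v, 's) exp \<Rightarrow> 't atom
                 \<Rightarrow> ('p, 'v, ('t, 'p, 'v, 's) exp) outc \<Rightarrow> 's" where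
  "der st (Tst b) = (\<lambda>a y. if beval a b then (if y = Acc then 1 else 0)
                                     else (if y = Rej then 1 else 0))"
| "der st (Ret v) = (\<lambda>a y. if y = Rv v then 1 else 0)"
| "der st (Act p) = (\<lambda>a y. if y = Tr p (Tst BOne) then 1 else 0)"
| "der st (GChoice e b f) = (\<lambda>a y. if beval a b then der st e a y else der st f a y)"
| "der st (WChoice e r s f) = (\<lambda>a y. r * der st e a y + s * der st f a y)"
| "der st (Seq e f) = (\<lambda>a y. \<Sum>x\<in>{x. der st e a x \<noteq> 0}. der st e a x *
       (case x of Acc \<Rightarrow> der st f a y
                | Tr p e' \<Rightarrow> (if y = Tr p (Seq e' f) then 1 else 0)
                | _ \<Rightarrow> (if y = x then 1 else 0)))"
| "der st (Loop e b) = (\<lambda>a y.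
       if \<not> beval a b then (if y = Acc then 1 else 0)
       else (case y of
               Acc \<Rightarrow> 0
             | Rej \<Rightarrow> st (der st e a Acc) * der st e a Rej
             | Rv v \<Rightarrow> st (der st e a Acc) * der st e a (Rv v)
             | Tr p g \<Rightarrow> (case g of
                           Seq e' h \<Rightarrow> (if h = Loop e b then st (der st e a Acc) * der st e a (Tr p e') else 0)
                         | _ \<Rightarrow> 0)))"

definition bisimilar :: "('s::{semiring_0,monoid_mult} \<Rightarrow> 's) \<Rightarrow> ('t, 'p, 'v, 's) exp \<Rightarrow> ('t, 'p, 'v, 's) exp \<Rightarrow> bool" where
  "bisimilar st e f \<longleftrightarrow> (\<exists>R. is_bisim UNIV (der st) UNIV (der st) R \<and> (e, f) \<in> R)"

primrec Ef :: "('t, 'p, 'v, 's::{semiring_0,monoid_mult}) exp \<Rightarrow> 't atom \<Rightarrow> 's" where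
  "Ef (Act p) a = 0"
| "Ef (Ret v) a = 0"
| "Ef (Tst b) a = (if beval a b then 1 else 0)"
| "Ef (WChoice e r s f) a = r * Ef e a + s * Ef f a"
| "Ef (GChoice e b f) a = (if beval a b then Ef e a else Ef f a)"
| "Ef (Seq e f) a = Ef e a * Ef f a"
| "Ef (Loop e b) a = (if beval a (BNot b) then 1 else 0)"

inductive gequiv :: "('s::{semiring_0,monoid_mult} \<Rightarrow> 's) \<Rightarrow> ('t, 'p, 'v, 's) exp \<Rightarrow> ('t, 'p, 'v, 's) exp \<Rightarrow> bool"
  for st :: "'s \<Rightarrow> 's" where
  refl: "gequiv st e e"
| sym: "gequiv st e f \<Longrightarrow> gequiv st f e"
| trans: "gequiv st e f \<Longrightarrow> gequiv st f g \<Longrightarrow> gequiv st e g"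
| cong_GChoice: "gequiv st e e' \<Longrightarrow> gequiv st f f' \<Longrightarrow> gequiv st (GChoice e b f) (GChoice e' b f')"
| cong_Seq: "gequiv st e e' \<Longrightarrow> gequiv st f f' \<Longrightarrow> gequiv st (Seq e f) (Seq e' f')"
| cong_Loop: "gequiv st e e' \<Longrightarrow> gequiv st (Loop e b) (Loop e' b)"
| cong_WChoice: "gequiv st e e' \<Longrightarrow> gequiv st f f' \<Longrightarrow> gequiv st (WChoice e r s f) (WChoice e' r s f')"
| ba_Tst: "ba_equiv b c \<Longrightarrow> gequiv st (Tst b) (Tst c)"
| ba_GChoice: "ba_equiv b c \<Longrightarrow> gequiv st (GChoice e b f) (GChoice e c f)"
| ba_Loop: "ba_equiv b c \<Longrightarrow> gequiv st (Loop e b) (Loop e c)"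
| G1: "gequiv st (GChoice e b e) e"
| G2: "gequiv st (GChoice e b f) (GChoice (Seq (Tst b) e) b f)"
| G3: "gequiv st (GChoice e b f) (GChoice f (BNot b) e)"
| G4: "gequiv st (GChoice (GChoice e b f) c g) (GChoice e (BAnd b c) (GChoice f c g))"
| D1: "gequiv st (WChoice e r s (GChoice f b g)) (GChoice (WChoice e r s f) b (WChoice e r s g))"
| D2: "gequiv st (WChoice e r s (WChoice f t u g)) (WChoice e r 1 (WChoice f (s * t) (s * u) g))"
| D3: "gequiv st (Seq (Tst b) (WChoice e r s f)) (Seq (Tst b) (WChoice (Seq (Tst b) e) r s (Seq (Tst b) f)))"
| S1a: "gequiv st (Seq (Tst BOne) e) e"
| S1b: "gequiv st e (Seq e (Tst BOne))"
| S2: "gequiv st (Seq (Seq e f) g) (Seq e (Seq f g))"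
| S3: "gequiv st (Seq (Tst BZero) e) (Tst BZero)"
| S4: "gequiv st (Seq (WChoice e r s f) g) (WChoice (Seq e g) r s (Seq f g))"
| S5: "gequiv st (Seq (GChoice e b f) g) (GChoice (Seq e g) b (Seq f g))"
| S6: "gequiv st (Seq (Ret v) e) (Ret v)"
| S7: "gequiv st (Seq (Tst b) (Tst c)) (Tst (BAnd b c))"
| L1: "gequiv st (Loop e b) (GChoice (Seq e (Loop e b)) b (Tst BOne))"
| C1: "gequiv st (odot 1) (Tst BOne)"
| C2: "gequiv st (Seq (odot 0) e) (odot 0)"
| W1: "gequiv st (WChoice e r s e) (Seq (odot (r + s)) e)"
| W2: "gequiv st (WChoice e r s f) (WChoice f s r e)"
| W3: "gequiv st (WChoice e r s (WChoice f t u g)) (WChoice (WChoice e r (s * t) f) 1 (s * u) g)"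
| W4: "gequiv st (WChoice e (r * u) s f) (WChoice (Seq (odot u) e) r s f)"
| L2: "gequiv st e (GChoice (WChoice f r s (Tst BOne)) c g) \<Longrightarrow>
       gequiv st (Seq (Tst c) (Loop e b))
                 (Seq (Tst c) (GChoice (Seq (odot (st s * r)) (Seq f (Loop e b))) b (Tst BOne)))"
| F1: "gequiv st g (GChoice (Seq e g) b f) \<Longrightarrow> (\<forall>a. Ef e a = 0) \<Longrightarrow>
       gequiv st g (Seq (Loop e b) f)"

text \<open>Indeterminates are natural numbers (a system uses a finite set X of them).
  A summand t_i is either an expression f or a formal product g x.\<close>
datatype ('t, 'p, 'v, 's) titem = TExp "('t, 'p, 'v, 's) exp" | TVar "('t, 'p, 'v, 's) exp" nat

text \<open>A term GS_{a in At} w_a is given by a list of pairs (a, w_a) enumerating all atoms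
  (the order being the choice of gamma in the definition of GS); a weighted sum
  (+)_{i in I} r_i t_i is a list of pairs (r_i, t_i).\<close>
type_synonym ('t, 'p, 'v, 's) wterm = "('s \<times> ('t, 'p, 'v, 's) titem) list"
type_synonym ('t, 'p, 'v, 's) sterm = "('t atom \<times> ('t, 'p, 'v, 's) wterm) list"

primrec item_sub :: "(nat \<Rightarrow> ('t, 'p, 'v, 's) exp) \<Rightarrow> ('t, 'p, 'v, 's) titem \<Rightarrow> ('t, 'p, 'v, 's) exp" where
  "item_sub h (TExp f) = f"
| "item_sub h (TVar g x) = Seq g (h x)"

primrec wsum_sub :: "(nat \<Rightarrow> ('t, 'p, 'v, 's::{semiring_0,monoid_mult}) exp) \<Rightarrow> ('t, 'p, 'v, 's) wterm \<Rightarrow> ('t, 'p, 'v, 's) exp" where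
  "wsum_sub h [] = odot 0"
| "wsum_sub h (rt # ws) = WChoice (item_sub h (snd rt)) (fst rt) 1 (wsum_sub h ws)"

primrec term_sub :: "(nat \<Rightarrow> ('t::finite, 'p, 'v, 's::{semiring_0,monoid_mult}) exp) \<Rightarrow> ('t, 'p, 'v, 's) sterm \<Rightarrow> ('t, 'p, 'v, 's) exp" where
  "term_sub h [] = Tst BZero"
| "term_sub h (aw # rest) = GChoice (wsum_sub h (snd aw)) (atom_test (fst aw)) (term_sub h rest)"

definition is_term :: "nat set \<Rightarrow> ('t, 'p, 'v, 's) sterm \<Rightarrow> bool" where
  "is_term X tm \<longleftrightarrow> distinct (map fst tm) \<and> set (map fst tm) = UNIV \<and>
     (\<forall>aw\<in>set tm. \<forall>rt\<in>set (snd aw). \<forall>g x. snd rt = TVar g x \<longrightarrow> x \<in> X)"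

definition is_system :: "nat set \<Rightarrow> (nat \<Rightarrow> ('t, 'p, 'v, 's) sterm) \<Rightarrow> bool" where
  "is_system X \<tau> \<longleftrightarrow> finite X \<and> (\<forall>x\<in>X. is_term X (\<tau> x))"

definition salomaa :: "nat set \<Rightarrow> (nat \<Rightarrow> ('t, 'p, 'v, 's::{semiring_0,monoid_mult}) sterm) \<Rightarrow> bool" where
  "salomaa X \<tau> \<longleftrightarrow> is_system X \<tau> \<and>
     (\<forall>x\<in>X. \<forall>aw\<in>set (\<tau> x). \<forall>rt\<in>set (snd aw). \<forall>g y. snd rt = TVar g y \<longrightarrow> (\<forall>a. Ef g a = 0))"

inductive dequiv :: "('s::{semiring_0,monoid_mult} \<Rightarrow> 's) \<Rightarrow> ('t::finite, 'p, 'v, 's) exp \<Rightarrow> ('t, 'p, 'v, 's) exp \<Rightarrow> bool"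
  for st :: "'s \<Rightarrow> 's" where
  base: "gequiv st e f \<Longrightarrow> dequiv st e f"
| refl: "dequiv st e e"
| sym: "dequiv st e f \<Longrightarrow> dequiv st f e"
| trans: "dequiv st e f \<Longrightarrow> dequiv st f g \<Longrightarrow> dequiv st e g"
| cong_GChoice: "dequiv st e e' \<Longrightarrow> dequiv st f f' \<Longrightarrow> dequiv st (GChoice e b f) (GChoice e' b f')"
| cong_Seq: "dequiv st e e' \<Longrightarrow> dequiv st f f' \<Longrightarrow> dequiv st (Seq e f) (Seq e' f')"
| cong_Loop: "dequiv st e e' \<Longrightarrow> dequiv st (Loop e b) (Loop e' b)"
| cong_WChoice: "dequiv st e e' \<Longrightarrow> dequiv st f f' \<Longrightarrow> dequiv st (WChoice e r s f) (WChoice e' r s f')"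
| UA: "salomaa X \<tau> \<Longrightarrow>
       (\<forall>y\<in>X. dequiv st (h y) (term_sub h (\<tau> y))) \<Longrightarrow>
       (\<forall>y\<in>X. dequiv st (k y) (term_sub k (\<tau> y))) \<Longrightarrow>
       x \<in> X \<Longrightarrow> dequiv st (h x) (k x)"

definition positive_sr :: "'s::comm_monoid_add itself \<Rightarrow> bool" where
  "positive_sr _ \<longleftrightarrow> (\<forall>x y::'s. x + y = 0 \<longrightarrow> x = 0 \<and> y = 0)"

definition refinement_sr :: "'s::comm_monoid_add itself \<Rightarrow> bool" where
  "refinement_sr _ \<longleftrightarrow> (\<forall>x y z w::'s. x + y = z + w \<longrightarrow>
     (\<exists>s t u v. s + t = x \<and> s + u = z \<and> u + v = y \<and> t + v = w))"

definition conway :: "('s::{semiring_0,monoid_mult} \<Rightarrow> 's) \<Rightarrow> bool" where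
  "conway st \<longleftrightarrow> (\<forall>a b. st (a + b) = st a * st (b * st a) \<and> st (a * b) = 1 + a * st (b * a) * b)"

end

(*
  Call a set of outcomes saturated if it is closed under replacing the residual expression of
  a transition by a dequiv-equivalent one.  By induction on dequiv, equivalent expressions give
  the same mass to every saturated set.  Masses of derivatives are compositional: the mass of
  e;f on U is E(e) times the mass of f on U plus the mass of e on the outcomes that continue
  into U, and similarly for loops, so each axiom becomes a semiring identity (Conway's laws for
  L1 and L2).  For the unique-solution rule, guardedness means that a prefix g of g x only sees
  the dequiv-class of the value of x, and the rule itself identifies the two solutions.

  In a positive refinement semiring, equal masses on each dequiv-class of transition targets
  are matched by a coupling supported on dequiv, obtained by solving a transportation problem
  within each class.  These couplings make dequiv itself a bisimulation.
*)

theory Submission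
  imports Defs
begin

section \<open>Finitely supported weightings\<close>

lemma mass_eq_sum:
  fixes \<nu> :: "'a \<Rightarrow> 's::comm_monoid_add"
  assumes "finite S" "{x. \<nu> x \<noteq> 0} \<subseteq> S"
  shows "mass \<nu> U = (\<Sum>x\<in>S \<inter> U. \<nu> x)"
  unfolding mass_def by (rule sum.mono_neutral_left) (use assms in auto)

lemma mass_eq_sum_indicator:
  fixes \<nu> :: "'a \<Rightarrow> 's::{semiring_0,monoid_mult}"
  assumes "finite S" "{x. \<nu> x \<noteq> 0} \<subseteq> S"
  shows "mass \<nu> U = (\<Sum>x\<in>S. \<nu> x * (if x \<in> U then 1 else 0))"
  using assms by (simp add: mass_eq_sum sum.inter_restrict if_distrib cong: if_cong)

lemma mass_cong_supp:
  "{x\<in>A. \<nu> x \<noteq> 0} = {x\<in>B. \<nu> x \<noteq> 0} \<Longrightarrow> mass \<nu> A = mass \<nu> B"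
  by (simp add: mass_def)

lemma mass_UNIV:
  "{x. \<nu> x \<noteq> 0} \<subseteq> A \<Longrightarrow> mass \<nu> A = mass \<nu> UNIV"
  by (rule mass_cong_supp) auto

lemma mass_empty [simp]: "mass \<nu> {} = 0"
  by (simp add: mass_def)

lemma mass_zero [simp]: "mass (\<lambda>_. 0) U = 0"
  by (simp add: mass_def)

lemma fin_supp_zero [simp]: "fin_supp (\<lambda>_. 0)"
  by (simp add: fin_supp_def)

lemma mass_singleton: "mass \<nu> {z} = \<nu> z"
proof -
  have "{x\<in>{z}. \<nu> x \<noteq> 0} = (if \<nu> z = 0 then {} else {z})"
    by auto
  then show ?thesis
    by (simp add: mass_def)
qed

lemma mass_indicator [simp]:
  "mass (\<lambda>y. if y = z then 1 else 0 :: 's::{comm_monoid_add,one}) U = (if z \<in> U then 1 else 0)"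
  by (subst mass_eq_sum[of "{z}"]) auto

lemma fin_supp_indicator [simp]: "fin_supp (\<lambda>y. if y = z then 1 else 0 :: 's::{zero,one})"
  unfolding fin_supp_def by (rule finite_subset[of _ "{z}"]) auto

lemma mass_image:
  assumes "inj g"
  shows "mass \<nu> (g ` K) = mass (\<nu> \<circ> g) K"
proof -
  have "{x \<in> g ` K. \<nu> x \<noteq> 0} = g ` {z \<in> K. \<nu> (g z) \<noteq> 0}"
    by auto
  then show ?thesis
    unfolding mass_def using assms by (simp add: sum.reindex inj_on_def inj_def)
qed

lemma fin_supp_comp_inj: "fin_supp \<nu> \<Longrightarrow> inj g \<Longrightarrow> fin_supp (\<nu> \<circ> g)"
  unfolding fin_supp_def by (drule finite_vimageI) (auto simp: vimage_def)

lemma mass_remove: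
  fixes \<nu> :: "'a \<Rightarrow> 's::comm_monoid_add"
  assumes "fin_supp \<nu>"
  shows "mass \<nu> U = (if z \<in> U then \<nu> z else 0) + mass \<nu> (U - {z})"
proof -
  define S where "S = insert z {x. \<nu> x \<noteq> 0}"
  have S: "finite S" "{x. \<nu> x \<noteq> 0} \<subseteq> S"
    using assms by (auto simp: S_def fin_supp_def)
  have "(\<Sum>x\<in>S \<inter> U. \<nu> x) = (if z \<in> U then \<nu> z else 0) + (\<Sum>x\<in>S \<inter> (U - {z}). \<nu> x)"
  proof (cases "z \<in> U")
    case True
    then have "S \<inter> U = insert z (S \<inter> (U - {z}))"
      by (auto simp: S_def)
    then show ?thesis
      using True S(1) by simp
  next
    case False
    then show ?thesis
      by (simp add: Diff_triv)
  qed
  then show ?thesis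
    by (simp only: mass_eq_sum[OF S])
qed

lemma sum_mult_indicator_unique:
  fixes c :: "'a \<Rightarrow> 's::{semiring_0,monoid_mult}"
  assumes "finite S" "\<And>x. x \<notin> S \<Longrightarrow> c x = 0" "\<And>x. P x \<longleftrightarrow> Q \<and> x = x0"
  shows "(\<Sum>x\<in>S. c x * (if P x then 1 else 0)) = (if Q then c x0 else 0)"
proof -
  have "(\<Sum>x\<in>S. c x * (if P x then 1 else 0)) = (\<Sum>x\<in>S. if x = x0 then (if Q then c x else 0) else 0)"
    using assms(3) by (intro sum.cong HOL.refl) auto
  then show ?thesis
    using assms(1,2) by (auto simp: sum.delta')
qed

lemma supp_mixture_subset:
  fixes \<nu> :: "'a \<Rightarrow> 's::semiring_0"
  shows "{y. (\<Sum>x\<in>S. \<nu> x * K x y) \<noteq> 0} \<subseteq> (\<Union>x\<in>S. {y. K x y \<noteq> 0})"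
proof
  fix y
  assume "y \<in> {y. (\<Sum>x\<in>S. \<nu> x * K x y) \<noteq> 0}"
  then obtain x where "x \<in> S" "\<nu> x * K x y \<noteq> 0"
    by (auto elim: sum.not_neutral_contains_not_neutral)
  then show "y \<in> (\<Union>x\<in>S. {y. K x y \<noteq> 0})"
    by (intro UN_I[of x]) auto
qed

lemma fin_supp_mixture:
  fixes \<nu> :: "'a \<Rightarrow> 's::semiring_0"
  assumes "finite S" "\<And>x. x \<in> S \<Longrightarrow> fin_supp (K x)"
  shows "fin_supp (\<lambda>y. \<Sum>x\<in>S. \<nu> x * K x y)"
  unfolding fin_supp_def
  by (rule finite_subset[OF supp_mixture_subset]) (use assms in \<open>simp add: fin_supp_def\<close>)

lemma mass_mixture:
  fixes \<nu> :: "'a \<Rightarrow> 's::semiring_0"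
  assumes "finite S" "\<And>x. x \<in> S \<Longrightarrow> fin_supp (K x)"
  shows "mass (\<lambda>y. \<Sum>x\<in>S. \<nu> x * K x y) U = (\<Sum>x\<in>S. \<nu> x * mass (K x) U)"
proof -
  define G where "G = (\<Union>x\<in>S. {y. K x y \<noteq> 0})"
  have G: "finite G" "\<And>x. x \<in> S \<Longrightarrow> {y. K x y \<noteq> 0} \<subseteq> G"
    using assms by (auto simp: G_def fin_supp_def)
  have "mass (\<lambda>y. \<Sum>x\<in>S. \<nu> x * K x y) U = (\<Sum>y\<in>G \<inter> U. \<Sum>x\<in>S. \<nu> x * K x y)"
    using supp_mixture_subset unfolding G_def by (rule mass_eq_sum[OF G(1)[unfolded G_def]])
  also have "\<dots> = (\<Sum>x\<in>S. \<nu> x * (\<Sum>y\<in>G \<inter> U. K x y))"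
    by (subst sum.swap) (simp add: sum_distrib_left)
  also have "\<dots> = (\<Sum>x\<in>S. \<nu> x * mass (K x) U)"
    using G by (intro sum.cong HOL.refl) (simp add: mass_eq_sum)
  finally show ?thesis .
qed

lemma mass_linear:
  fixes d1 d2 :: "'a \<Rightarrow> 's::semiring_0"
  assumes "fin_supp d1" "fin_supp d2"
  shows "mass (\<lambda>y. r * d1 y + s * d2 y) U = r * mass d1 U + s * mass d2 U"
proof -
  define S where "S = {x. d1 x \<noteq> 0} \<union> {x. d2 x \<noteq> 0}"
  have S: "finite S" "{x. d1 x \<noteq> 0} \<subseteq> S" "{x. d2 x \<noteq> 0} \<subseteq> S"
    using assms by (auto simp: S_def fin_supp_def)
  have "{x. r * d1 x + s * d2 x \<noteq> 0} \<subseteq> S"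
    by (auto simp: S_def)
  then have "mass (\<lambda>y. r * d1 y + s * d2 y) U = (\<Sum>x\<in>S \<inter> U. r * d1 x + s * d2 x)"
    by (rule mass_eq_sum[OF S(1)])
  also have "\<dots> = r * mass d1 U + s * mass d2 U"
    by (simp add: mass_eq_sum[OF S(1,2)] mass_eq_sum[OF S(1,3)] sum_distrib_left sum.distrib)
  finally show ?thesis .
qed

section \<open>Couplings over positive refinement monoids\<close>

lemma sum_eq_0_positive:
  fixes \<nu> :: "'a \<Rightarrow> 's::comm_monoid_add"
  assumes "positive_sr TYPE('s)" "finite B" "sum \<nu> B = 0" "b \<in> B"
  shows "\<nu> b = 0"
  using assms(2-4)
proof (induction B rule: finite_induct)
  case (insert c B)
  then have "\<nu> c + sum \<nu> B = 0"
    by simp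
  then have "\<nu> c = 0 \<and> sum \<nu> B = 0"
    using assms(1) unfolding positive_sr_def by blast
  then show ?case
    using insert by auto
qed simp

lemma sum_split_refinement:
  fixes \<nu> :: "'a \<Rightarrow> 's::comm_monoid_add"
  assumes pos: "positive_sr TYPE('s)" and ref: "refinement_sr TYPE('s)"
    and "finite B" "x + z = sum \<nu> B"
  shows "\<exists>\<alpha> \<beta>. (\<forall>b\<in>B. \<nu> b = \<alpha> b + \<beta> b) \<and> sum \<alpha> B = x \<and> sum \<beta> B = z"
  using assms(3,4)
proof (induction B arbitrary: x z rule: finite_induct)
  case empty
  then have "x + z = 0"
    by simp
  then have "x = 0" "z = 0"
    using pos unfolding positive_sr_def by blast+
  then show ?case
    by simp
next
  case (insert b B)
  then have "x + z = \<nu> b + sum \<nu> B"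
    by simp
  then obtain s t u v where stuv: "s + t = x" "s + u = \<nu> b" "u + v = z" "t + v = sum \<nu> B"
    using ref unfolding refinement_sr_def by blast
  obtain \<alpha> \<beta> where \<alpha>\<beta>: "\<forall>c\<in>B. \<nu> c = \<alpha> c + \<beta> c" "sum \<alpha> B = t" "sum \<beta> B = v"
    using insert.IH[OF stuv(4)] by blast
  have "sum (\<alpha>(b := s)) B = t" "sum (\<beta>(b := u)) B = v"
    using insert.hyps(2) \<alpha>\<beta>(2,3) by (auto intro!: sum.cong)
  then show ?case
    using insert.hyps \<alpha>\<beta> stuv by (intro exI[of _ "\<alpha>(b := s)"] exI[of _ "\<beta>(b := u)"]) auto
qed

definition is_transport ::
  "('a \<Rightarrow> 's::comm_monoid_add) \<Rightarrow> ('b \<Rightarrow> 's) \<Rightarrow> 'a set \<Rightarrow> 'b set \<Rightarrow> ('a \<Rightarrow> 'b \<Rightarrow> 's) \<Rightarrow> bool" where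
  "is_transport \<mu> \<nu> A B M \<longleftrightarrow> (\<forall>a\<in>A. sum (M a) B = \<mu> a) \<and> (\<forall>b\<in>B. (\<Sum>a\<in>A. M a b) = \<nu> b)"

lemma transport_exists:
  fixes \<mu> :: "'a \<Rightarrow> 's::comm_monoid_add" and \<nu> :: "'b \<Rightarrow> 's"
  assumes pos: "positive_sr TYPE('s)" and ref: "refinement_sr TYPE('s)"
    and "finite A" "finite B" "sum \<mu> A = sum \<nu> B"
  shows "\<exists>M. is_transport \<mu> \<nu> A B M"
  unfolding is_transport_def using assms(3,5)
proof (induction A arbitrary: \<nu> rule: finite_induct)
  case empty
  then show ?case
    using sum_eq_0_positive[OF pos \<open>finite B\<close>] by auto
next
  case (insert a A)
  then obtain \<alpha> \<beta> where \<alpha>\<beta>: "\<forall>b\<in>B. \<nu> b = \<alpha> b + \<beta> b" "sum \<alpha> B = \<mu> a" "sum \<beta> B = sum \<mu> A"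
    using sum_split_refinement[OF pos ref \<open>finite B\<close>, of "\<mu> a" "sum \<mu> A" \<nu>] by auto
  obtain M where M: "\<forall>a\<in>A. sum (M a) B = \<mu> a" "\<forall>b\<in>B. (\<Sum>a\<in>A. M a b) = \<beta> b"
    using insert.IH[of \<beta>] \<alpha>\<beta>(3) by auto
  have "(\<Sum>a'\<in>A. (M(a := \<alpha>)) a' b) = (\<Sum>a'\<in>A. M a' b)" for b
    using insert.hyps by (intro sum.cong) auto
  then show ?case
    using insert.hyps \<alpha>\<beta> M by (intro exI[of _ "M(a := \<alpha>)"]) auto
qed

definition is_coupling ::
  "('a \<Rightarrow> 'b \<Rightarrow> bool) \<Rightarrow> ('a \<Rightarrow> 's::comm_monoid_add) \<Rightarrow> ('b \<Rightarrow> 's) \<Rightarrow> ('a \<Rightarrow> 'b \<Rightarrow> 's) \<Rightarrow> bool" where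
  "is_coupling Rel \<mu> \<nu> W \<longleftrightarrow>
     (\<forall>x y. W x y \<noteq> 0 \<longrightarrow> Rel x y \<and> \<mu> x \<noteq> 0 \<and> \<nu> y \<noteq> 0) \<and>
     (\<forall>x. mass (W x) UNIV = \<mu> x) \<and> (\<forall>y. mass (\<lambda>x. W x y) UNIV = \<nu> y)"

lemma coupling_of_class_transports:
  fixes \<mu> \<nu> :: "'a \<Rightarrow> 's::comm_monoid_add"
  assumes eq: "equivp Rel" and fin: "fin_supp \<mu>" "fin_supp \<nu>"
    and M: "\<And>x. is_transport \<mu> \<nu> {a. Rel x a \<and> \<mu> a \<noteq> 0} {b. Rel x b \<and> \<nu> b \<noteq> 0} (M x)"
    and M_class: "\<And>x y. Rel x y \<Longrightarrow> M x = M y"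
  shows "is_coupling Rel \<mu> \<nu> (\<lambda>a b. if Rel a b \<and> \<mu> a \<noteq> 0 \<and> \<nu> b \<noteq> 0 then M a a b else 0)"
    (is "is_coupling Rel \<mu> \<nu> ?W")
proof -
  have fin': "finite {a. Rel x a \<and> \<mu> a \<noteq> 0}" "finite {b. Rel x b \<and> \<nu> b \<noteq> 0}" for x
    using fin unfolding fin_supp_def by (simp_all add: Collect_conj_eq)
  have "mass (?W x) UNIV = \<mu> x" for x
  proof (cases "\<mu> x = 0")
    case False
    have "{b. ?W x b \<noteq> 0} \<subseteq> {b. Rel x b \<and> \<nu> b \<noteq> 0}"
      by auto
    then have "mass (?W x) UNIV = (\<Sum>b\<in>{b. Rel x b \<and> \<nu> b \<noteq> 0} \<inter> UNIV. ?W x b)"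
      by (rule mass_eq_sum[OF fin'(2)])
    also have "\<dots> = (\<Sum>b | Rel x b \<and> \<nu> b \<noteq> 0. M x x b)"
      using False by (intro sum.cong) auto
    also have "\<dots> = \<mu> x"
      using M[of x] False eq by (simp add: is_transport_def equivp_reflp)
    finally show ?thesis .
  qed (simp add: mass_def)
  moreover have "mass (\<lambda>a. ?W a y) UNIV = \<nu> y" for y
  proof (cases "\<nu> y = 0")
    case False
    have sym: "Rel a b \<Longrightarrow> Rel b a" for a b
      using eq by (rule equivp_symp)
    have "{a. ?W a y \<noteq> 0} \<subseteq> {a. Rel y a \<and> \<mu> a \<noteq> 0}"
      using sym by auto
    then have "mass (\<lambda>a. ?W a y) UNIV = (\<Sum>a\<in>{a. Rel y a \<and> \<mu> a \<noteq> 0} \<inter> UNIV. ?W a y)"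
      by (rule mass_eq_sum[OF fin'(1)])
    also have "\<dots> = (\<Sum>a | Rel y a \<and> \<mu> a \<noteq> 0. M y a y)"
      using False sym M_class by (intro sum.cong) auto
    also have "\<dots> = \<nu> y"
      using M[of y] False eq by (simp add: is_transport_def equivp_reflp)
    finally show ?thesis .
  qed (simp add: mass_def)
  ultimately show ?thesis
    unfolding is_coupling_def by auto
qed

text \<open>Solve one transportation problem per equivalence class; indexing the solutions by
  the representative \<open>SOME y. Rel x y\<close>, which only depends on the class of x, glues them.\<close>

lemma coupling_exists:
  fixes \<mu> \<nu> :: "'a \<Rightarrow> 's::comm_monoid_add"
  assumes pos: "positive_sr TYPE('s)" and ref: "refinement_sr TYPE('s)"
    and eq: "equivp Rel" and fin: "fin_supp \<mu>" "fin_supp \<nu>"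
    and classes: "\<And>x. mass \<mu> {y. Rel x y} = mass \<nu> {y. Rel x y}"
  shows "\<exists>W. is_coupling Rel \<mu> \<nu> W"
proof -
  have "\<exists>M. is_transport \<mu> \<nu> {a. Rel x a \<and> \<mu> a \<noteq> 0} {b. Rel x b \<and> \<nu> b \<noteq> 0} M" for x
  proof (rule transport_exists[OF pos ref])
    show "finite {a. Rel x a \<and> \<mu> a \<noteq> 0}" "finite {b. Rel x b \<and> \<nu> b \<noteq> 0}"
      using fin unfolding fin_supp_def by (simp_all add: Collect_conj_eq)
    show "sum \<mu> {a. Rel x a \<and> \<mu> a \<noteq> 0} = sum \<nu> {b. Rel x b \<and> \<nu> b \<noteq> 0}"
      using classes[of x] by (simp add: mass_def)
  qed
  then obtain M where M: "\<And>x. is_transport \<mu> \<nu> {a. Rel x a \<and> \<mu> a \<noteq> 0} {b. Rel x b \<and> \<nu> b \<noteq> 0} (M x)"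
    by metis
  define r where "r x = (SOME y. Rel x y)" for x
  have class_eq: "Rel x = Rel z" if "Rel x z" for x z
    using eq that unfolding equivp_def by blast
  have rep: "Rel x (r x)" for x
    unfolding r_def using eq by (intro someI[of "Rel x" x]) (simp add: equivp_reflp)
  have "is_coupling Rel \<mu> \<nu> (\<lambda>a b. if Rel a b \<and> \<mu> a \<noteq> 0 \<and> \<nu> b \<noteq> 0 then M (r a) a b else 0)"
  proof (rule coupling_of_class_transports[OF eq fin, where M = "\<lambda>x. M (r x)"])
    show "is_transport \<mu> \<nu> {a. Rel x a \<and> \<mu> a \<noteq> 0} {b. Rel x b \<and> \<nu> b \<noteq> 0} (M (r x))" for x
      using M[of "r x"] class_eq[OF rep[of x]] by simp
    show "M (r x) = M (r z)" if "Rel x z" for x z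
      using class_eq[OF that] by (simp add: r_def)
  qed
  then show ?thesis
    by blast
qed

section \<open>Bisimulations from couplings\<close>

lemma inj_outc_pair: "inj (\<lambda>z. (map_outc id id fst z, map_outc id id snd z))"
proof (rule injI)
  fix z z' :: "('p, 'v, 'x \<times> 'y) outc"
  assume "(map_outc id id fst z, map_outc id id snd z) = (map_outc id id fst z', map_outc id id snd z')"
  then show "z = z'"
    by (cases z; cases z') (auto simp: prod_eq_iff)
qed

definition coupled_step ::
  "('x \<Rightarrow> 't atom \<Rightarrow> ('p, 'v, 'x) outc \<Rightarrow> 's) \<Rightarrow> ('x \<Rightarrow> 'x \<Rightarrow> 't atom \<Rightarrow> 'p \<Rightarrow> 'x \<Rightarrow> 'x \<Rightarrow> 's)
   \<Rightarrow> 'x \<times> 'x \<Rightarrow> 't atom \<Rightarrow> ('p, 'v, 'x \<times> 'x) outc \<Rightarrow> 's" where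
  "coupled_step \<beta> W q a z = (case z of Acc \<Rightarrow> \<beta> (fst q) a Acc | Rej \<Rightarrow> \<beta> (fst q) a Rej
     | Rv v \<Rightarrow> \<beta> (fst q) a (Rv v) | Tr p (u, w) \<Rightarrow> W (fst q) (snd q) a p u w)"

lemma coupled_step_simps [simp]:
  "coupled_step \<beta> W (x, y) a Acc = \<beta> x a Acc"
  "coupled_step \<beta> W (x, y) a Rej = \<beta> x a Rej"
  "coupled_step \<beta> W (x, y) a (Rv v) = \<beta> x a (Rv v)"
  "coupled_step \<beta> W (x, y) a (Tr p (u, w)) = W x y a p u w"
  by (simp_all add: coupled_step_def)

lemma is_automaton_coupled_step:
  fixes \<beta> :: "'x \<Rightarrow> 't atom \<Rightarrow> ('p, 'v, 'x) outc \<Rightarrow> 's::comm_monoid_add"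
  assumes fin: "\<And>x a. fin_supp (\<beta> x a)"
    and outputs: "\<And>x y a z. (x, y) \<in> R \<Longrightarrow> (\<And>p u. z \<noteq> Tr p u) \<Longrightarrow> \<beta> x a z = \<beta> y a z"
    and W: "\<And>x y a p. (x, y) \<in> R \<Longrightarrow>
      is_coupling (\<lambda>u w. (u, w) \<in> R) (\<lambda>u. \<beta> x a (Tr p u)) (\<lambda>w. \<beta> y a (Tr p w)) (W x y a p)"
  shows "is_automaton R (coupled_step \<beta> W)"
  unfolding is_automaton_def
proof (intro ballI allI conjI impI)
  fix q a
  assume "q \<in> R"
  then obtain x y where q: "q = (x, y)" "(x, y) \<in> R"
    by (cases q) auto
  have out: "\<beta> x a Acc = \<beta> y a Acc" "\<beta> x a Rej = \<beta> y a Rej" "\<beta> x a (Rv v) = \<beta> y a (Rv v)" for v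
    by (simp_all add: outputs[OF q(2)])
  let ?pair = "\<lambda>z. (map_outc id id fst z, map_outc id id snd z)"
  have "{z. coupled_step \<beta> W q a z \<noteq> 0} \<subseteq> ?pair -` ({z. \<beta> x a z \<noteq> 0} \<times> {z. \<beta> y a z \<noteq> 0})"
  proof
    fix z
    assume "z \<in> {z. coupled_step \<beta> W q a z \<noteq> 0}"
    then show "z \<in> ?pair -` ({z. \<beta> x a z \<noteq> 0} \<times> {z. \<beta> y a z \<noteq> 0})"
      using out W[OF q(2)] unfolding q(1)
      by (cases z) (auto simp: is_coupling_def)
  qed
  moreover have "finite (?pair -` ({z. \<beta> x a z \<noteq> 0} \<times> {z. \<beta> y a z \<noteq> 0}))"
    using fin inj_outc_pair by (intro finite_vimageI) (auto simp: fin_supp_def)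
  ultimately show "fin_supp (coupled_step \<beta> W q a)"
    unfolding fin_supp_def by (rule finite_subset)
next
  fix q a p y
  assume "q \<in> R" "coupled_step \<beta> W q a (Tr p y) \<noteq> 0"
  then show "y \<in> R"
    using W by (cases q; cases y) (auto simp: is_coupling_def)
qed

lemma is_hom_fst_coupled_step:
  fixes \<beta> :: "'x \<Rightarrow> 't atom \<Rightarrow> ('p, 'v, 'x) outc \<Rightarrow> 's::comm_monoid_add"
  assumes W: "\<And>x y a p. (x, y) \<in> R \<Longrightarrow>
      is_coupling (\<lambda>u w. (u, w) \<in> R) (\<lambda>u. \<beta> x a (Tr p u)) (\<lambda>w. \<beta> y a (Tr p w)) (W x y a p)"
  shows "is_hom R (coupled_step \<beta> W) UNIV \<beta> fst"
  unfolding is_hom_def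
proof (intro ballI allI conjI impI)
  fix q a and p :: 'p and u :: 'x
  assume "q \<in> R"
  then obtain x y where q: "q = (x, y)" "(x, y) \<in> R"
    by (cases q) auto
  have fibre: "{Tr p q' | q'. q' \<in> R \<and> fst q' = u} = (\<lambda>w. Tr p (u, w)) ` {w. (u, w) \<in> R}"
    by force
  have "mass (coupled_step \<beta> W q a) {Tr p q' | q'. q' \<in> R \<and> fst q' = u} =
      mass (W x y a p u) {w. (u, w) \<in> R}"
    unfolding fibre by (simp add: mass_image inj_def o_def q(1))
  also have "\<dots> = \<beta> x a (Tr p u)"
    using W[OF q(2)] by (subst mass_UNIV) (auto simp: is_coupling_def)
  finally show "\<beta> (fst q) a (Tr p u) = mass (coupled_step \<beta> W q a) {Tr p q' | q'. q' \<in> R \<and> fst q' = u}"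
    by (simp add: q(1))
qed (auto simp: coupled_step_def)

lemma is_hom_snd_coupled_step:
  fixes \<beta> :: "'x \<Rightarrow> 't atom \<Rightarrow> ('p, 'v, 'x) outc \<Rightarrow> 's::comm_monoid_add"
  assumes outputs: "\<And>x y a z. (x, y) \<in> R \<Longrightarrow> (\<And>p u. z \<noteq> Tr p u) \<Longrightarrow> \<beta> x a z = \<beta> y a z"
    and W: "\<And>x y a p. (x, y) \<in> R \<Longrightarrow>
      is_coupling (\<lambda>u w. (u, w) \<in> R) (\<lambda>u. \<beta> x a (Tr p u)) (\<lambda>w. \<beta> y a (Tr p w)) (W x y a p)"
  shows "is_hom R (coupled_step \<beta> W) UNIV \<beta> snd"
  unfolding is_hom_def
proof (intro ballI allI conjI impI)
  fix q a and p :: 'p and w :: 'x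
  assume "q \<in> R"
  then obtain x y where q: "q = (x, y)" "(x, y) \<in> R"
    by (cases q) auto
  have fibre: "{Tr p q' | q'. q' \<in> R \<and> snd q' = w} = (\<lambda>u. Tr p (u, w)) ` {u. (u, w) \<in> R}"
    by force
  have "mass (coupled_step \<beta> W q a) {Tr p q' | q'. q' \<in> R \<and> snd q' = w} =
      mass (\<lambda>u. W x y a p u w) {u. (u, w) \<in> R}"
    unfolding fibre by (simp add: mass_image inj_def o_def q(1))
  also have "\<dots> = \<beta> y a (Tr p w)"
    using W[OF q(2)] by (subst mass_UNIV) (auto simp: is_coupling_def)
  finally show "\<beta> (snd q) a (Tr p w) = mass (coupled_step \<beta> W q a) {Tr p q' | q'. q' \<in> R \<and> snd q' = w}"
    by (simp add: q(1))
qed (use outputs in \<open>auto simp: coupled_step_def\<close>)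

lemma is_bisim_of_couplings:
  fixes \<beta> :: "'x \<Rightarrow> 't atom \<Rightarrow> ('p, 'v, 'x) outc \<Rightarrow> 's::comm_monoid_add"
  assumes fin: "\<And>x a. fin_supp (\<beta> x a)"
    and outputs: "\<And>x y a z. (x, y) \<in> R \<Longrightarrow> (\<And>p u. z \<noteq> Tr p u) \<Longrightarrow> \<beta> x a z = \<beta> y a z"
    and couplings: "\<And>x y a p. (x, y) \<in> R \<Longrightarrow>
      \<exists>W. is_coupling (\<lambda>u w. (u, w) \<in> R) (\<lambda>u. \<beta> x a (Tr p u)) (\<lambda>w. \<beta> y a (Tr p w)) W"
  shows "is_bisim UNIV \<beta> UNIV \<beta> R"
proof -
  obtain W where W: "\<And>x y a p. (x, y) \<in> R \<Longrightarrow>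
      is_coupling (\<lambda>u w. (u, w) \<in> R) (\<lambda>u. \<beta> x a (Tr p u)) (\<lambda>w. \<beta> y a (Tr p w)) (W x y a p)"
    using couplings by metis
  have "is_automaton R (coupled_step \<beta> W)"
    using fin outputs W by (rule is_automaton_coupled_step)
  moreover have "is_hom R (coupled_step \<beta> W) UNIV \<beta> fst"
    using W by (rule is_hom_fst_coupled_step)
  moreover have "is_hom R (coupled_step \<beta> W) UNIV \<beta> snd"
    using outputs W by (rule is_hom_snd_coupled_step)
  ultimately show ?thesis
    unfolding is_bisim_def by auto
qed

section \<open>Masses of derivatives\<close>

type_synonym ('t, 'p, 'v, 's) outcome = "('p, 'v, ('t, 'p, 'v, 's) exp) outc"

abbreviation seq_cont :: "('t, 'p, 'v, 's) exp \<Rightarrow> ('t, 'p, 'v, 's) outcome \<Rightarrow> ('t, 'p, 'v, 's) outcome" where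
  "seq_cont f \<equiv> map_outc id id (\<lambda>e. Seq e f)"

definition seq_pre :: "('t, 'p, 'v, 's) exp \<Rightarrow> ('t, 'p, 'v, 's) outcome set \<Rightarrow> ('t, 'p, 'v, 's) outcome set" where
  "seq_pre f U = seq_cont f -` U - {Acc}"

lemma map_outc_eq_iff [simp]:
  "map_outc f g h x = Acc \<longleftrightarrow> x = Acc"
  "map_outc f g h x = Rej \<longleftrightarrow> x = Rej"
  "map_outc id id h x = Rv v \<longleftrightarrow> x = Rv v"
  "map_outc id id h x = Tr p y \<longleftrightarrow> (\<exists>e. x = Tr p e \<and> y = h e)"
  by (cases x; auto)+

lemma inj_seq_cont: "inj (seq_cont f)"
  by (rule outc.inj_map) (auto simp: inj_def)

lemma seq_pre_simps [simp]:
  "Acc \<notin> seq_pre f U"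
  "Rej \<in> seq_pre f U \<longleftrightarrow> Rej \<in> U"
  "Rv v \<in> seq_pre f U \<longleftrightarrow> Rv v \<in> U"
  "Tr p e \<in> seq_pre f U \<longleftrightarrow> Tr p (Seq e f) \<in> U"
  by (auto simp: seq_pre_def)

lemma seq_pre_Acc [simp]: "seq_pre f {Acc} = {}"
  by (auto simp: seq_pre_def)

definition seq_kernel ::
  "(('t, 'p, 'v, 's) outcome \<Rightarrow> 's::{zero,one}) \<Rightarrow> ('t, 'p, 'v, 's) exp
   \<Rightarrow> ('t, 'p, 'v, 's) outcome \<Rightarrow> ('t, 'p, 'v, 's) outcome \<Rightarrow> 's" where
  "seq_kernel \<delta> f x =
     (if x = Acc then \<delta> else (\<lambda>y. if y = seq_cont f x then 1 else 0))"

lemma fin_supp_seq_kernel: "fin_supp \<delta> \<Longrightarrow> fin_supp (seq_kernel \<delta> f x)"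
  by (simp add: seq_kernel_def)

lemma mass_seq_kernel:
  "mass (seq_kernel \<delta> f x) U = (if x = Acc then mass \<delta> U else if x \<in> seq_pre f U then 1 else 0)"
  by (simp add: seq_kernel_def seq_pre_def)

lemma der_Seq_eq_mixture:
  "der st (Seq e f) a =
     (\<lambda>y. \<Sum>x\<in>{x. der st e a x \<noteq> 0}. der st e a x * seq_kernel (der st f a) f x y)"
  by (auto simp: seq_kernel_def fun_eq_iff intro!: sum.cong split: outc.splits)

lemma der_Loop_eq_mixture:
  assumes "beval a b" "fin_supp (der st e a)"
  shows "der st (Loop e b) a =
    (\<lambda>y. \<Sum>x\<in>{x. der st e a x \<noteq> 0}. (st (der st e a Acc) * der st e a x) * seq_kernel (\<lambda>_. 0) (Loop e b) x y)"
proof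
  fix y
  define c where "c x = st (der st e a Acc) * der st e a x" for x
  let ?mix = "\<Sum>x\<in>{x. der st e a x \<noteq> 0}. c x * seq_kernel (\<lambda>_. 0) (Loop e b) x y"
  have mix: "?mix = (if Q then c x0 else 0)"
    if "\<And>x. seq_cont (Loop e b) x = y \<and> x \<noteq> Acc \<longleftrightarrow> Q \<and> x = x0" for Q x0
  proof -
    have "?mix = (\<Sum>x\<in>{x. der st e a x \<noteq> 0}. c x * (if seq_cont (Loop e b) x = y \<and> x \<noteq> Acc then 1 else 0))"
      by (intro sum.cong HOL.refl) (simp add: seq_kernel_def)
    also have "\<dots> = (if Q then c x0 else 0)"
      using assms(2) that unfolding fin_supp_def c_def by (intro sum_mult_indicator_unique) auto
    finally show ?thesis .
  qed
  have "der st (Loop e b) a y = ?mix"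
  proof (cases "\<exists>x0. seq_cont (Loop e b) x0 = y \<and> x0 \<noteq> Acc")
    case True
    then obtain x0 where x0: "seq_cont (Loop e b) x0 = y" "x0 \<noteq> Acc"
      by blast
    have "?mix = c x0"
      using x0 inj_seq_cont[THEN injD] by (subst mix[of True x0]) auto
    then show ?thesis
      using assms(1) x0 by (cases x0) (auto simp: c_def)
  next
    case False
    have "?mix = 0"
      using False by (subst mix[of False Acc]) auto
    then show ?thesis
      using assms(1) False by (cases y) (auto split: exp.splits)
  qed
  then show "der st (Loop e b) a y = (\<Sum>x\<in>{x. der st e a x \<noteq> 0}. (st (der st e a Acc) * der st e a x) * seq_kernel (\<lambda>_. 0) (Loop e b) x y)"
    by (simp add: c_def)
qed

lemma fin_supp_der: "fin_supp (der st e a)"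
proof (induction e)
  case (Tst b)
  then show ?case
    by (cases "beval a b") simp_all
next
  case (Seq e f)
  then show ?case
    unfolding der_Seq_eq_mixture
    by (intro fin_supp_mixture fin_supp_seq_kernel) (simp_all add: fin_supp_def)
next
  case (Loop e b)
  show ?case
  proof (cases "beval a b")
    case True
    show ?thesis
      unfolding der_Loop_eq_mixture[OF True Loop]
      by (intro fin_supp_mixture fin_supp_seq_kernel) (use Loop in \<open>simp_all add: fin_supp_def\<close>)
  qed simp
next
  case (WChoice e r s f)
  have "{y. r * der st e a y + s * der st f a y \<noteq> 0} \<subseteq> {y. der st e a y \<noteq> 0} \<union> {y. der st f a y \<noteq> 0}"
    by auto
  then show ?case
    using WChoice unfolding fin_supp_def by (auto intro: finite_subset)
next
  case (GChoice e b f)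
  then show ?case
    by (cases "beval a b") simp_all
qed simp_all

declare der.simps [simp del]

lemma mass_der_Act [simp]: "mass (der st (Act p) a) U = (if Tr p (Tst BOne) \<in> U then 1 else 0)"
  by (simp add: der.simps)

lemma mass_der_Ret [simp]: "mass (der st (Ret v) a) U = (if Rv v \<in> U then 1 else 0)"
  by (simp add: der.simps)

lemma mass_der_Tst [simp]:
  "mass (der st (Tst b) a) U = (if beval a b then (if Acc \<in> U then 1 else 0) else (if Rej \<in> U then 1 else 0))"
  by (cases "beval a b") (simp_all add: der.simps)

lemma mass_der_GChoice [simp]:
  "mass (der st (GChoice e b f) a) U = (if beval a b then mass (der st e a) U else mass (der st f a) U)"
  by (simp add: der.simps)

lemma mass_der_WChoice [simp]:
  "mass (der st (WChoice e r s f) a) U = r * mass (der st e a) U + s * mass (der st f a) U"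
  by (simp add: der.simps mass_linear fin_supp_der)

lemma mass_der_Seq [simp]:
  "mass (der st (Seq e f) a) U =
    mass (der st e a) {Acc} * mass (der st f a) U + mass (der st e a) (seq_pre f U)"
proof -
  define S where "S = {x. der st e a x \<noteq> 0}"
  have S: "finite S" "{x. der st e a x \<noteq> 0} \<subseteq> S"
    using fin_supp_der by (auto simp: S_def fin_supp_def)
  have "mass (der st (Seq e f) a) U = (\<Sum>x\<in>S. der st e a x * mass (seq_kernel (der st f a) f x) U)"
    unfolding der_Seq_eq_mixture S_def[symmetric]
    using S(1) by (rule mass_mixture) (simp add: fin_supp_seq_kernel fin_supp_der)
  also have "\<dots> = (\<Sum>x\<in>S. der st e a x * (if x \<in> {Acc} then 1 else 0) * mass (der st f a) U
      + der st e a x * (if x \<in> seq_pre f U then 1 else 0))"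
    by (intro sum.cong HOL.refl) (simp add: mass_seq_kernel)
  also have "\<dots> = mass (der st e a) {Acc} * mass (der st f a) U + mass (der st e a) (seq_pre f U)"
    by (simp add: mass_eq_sum_indicator[OF S] sum.distrib sum_distrib_right)
  finally show ?thesis .
qed

lemma mass_der_Loop [simp]:
  "mass (der st (Loop e b) a) U =
    (if beval a b then st (mass (der st e a) {Acc}) * mass (der st e a) (seq_pre (Loop e b) U)
     else (if Acc \<in> U then 1 else 0))"
proof (cases "beval a b")
  case True
  define S where "S = {x. der st e a x \<noteq> 0}"
  have S: "finite S" "{x. der st e a x \<noteq> 0} \<subseteq> S"
    using fin_supp_der by (auto simp: S_def fin_supp_def)
  have "mass (der st (Loop e b) a) U =
      (\<Sum>x\<in>S. (st (der st e a Acc) * der st e a x) * mass (seq_kernel (\<lambda>_. 0) (Loop e b) x) U)"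
    unfolding der_Loop_eq_mixture[OF True fin_supp_der] S_def[symmetric]
    using S(1) by (rule mass_mixture) (simp add: fin_supp_seq_kernel)
  also have "\<dots> = st (der st e a Acc) * (\<Sum>x\<in>S. der st e a x * (if x \<in> seq_pre (Loop e b) U then 1 else 0))"
    unfolding sum_distrib_left by (intro sum.cong HOL.refl) (simp add: mass_seq_kernel mult.assoc)
  finally show ?thesis
    using True by (simp add: mass_eq_sum_indicator[OF S, symmetric] mass_singleton)
next
  case False
  then show ?thesis
    by (simp add: der.simps)
qed

lemma mass_der_Acc_eq_Ef: "mass (der st e a) {Acc} = Ef e a"
  by (induction e) simp_all

lemma mass_der_odot [simp]: "mass (der st (odot r) a) U = r * (if Acc \<in> U then 1 else 0)"
  by (simp add: odot_def)

section \<open>Soundness for masses of saturated sets\<close>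

lemma conway_unfold: "conway st \<Longrightarrow> st x = 1 + x * st x"
  unfolding conway_def by (metis mult_1_left mult_1_right)

lemma conway_zero: "conway st \<Longrightarrow> st 0 = 1"
  using conway_unfold[of st 0] by simp

lemma conway_plus: "conway st \<Longrightarrow> st (s + y) = st s + st s * y * st (s + y)"
proof -
  assume c: "conway st"
  then have sum_star: "st (s + y) = st s * st (y * st s)"
    unfolding conway_def by blast
  also have "\<dots> = st s * (1 + y * st s * st (y * st s))"
    using conway_unfold[OF c, of "y * st s"] by simp
  also have "\<dots> = st s + st s * y * (st s * st (y * st s))"
    by (simp add: distrib_left mult.assoc)
  finally show ?thesis
    unfolding sum_star[symmetric] .
qed

definition saturated :: "('s::{semiring_0,monoid_mult} \<Rightarrow> 's) \<Rightarrow> ('t::finite, 'p, 'v, 's) outcome set \<Rightarrow> bool" where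
  "saturated st U \<longleftrightarrow> (\<forall>p x y. dequiv st x y \<longrightarrow> (Tr p x \<in> U \<longleftrightarrow> Tr p y \<in> U))"

definition mass_equiv ::
  "('s::{semiring_0,monoid_mult} \<Rightarrow> 's) \<Rightarrow> ('t::finite, 'p, 'v, 's) exp \<Rightarrow> ('t, 'p, 'v, 's) exp \<Rightarrow> bool" where
  "mass_equiv st e f \<longleftrightarrow> (\<forall>a U. saturated st U \<longrightarrow> mass (der st e a) U = mass (der st f a) U)"

lemma saturatedD: "saturated st U \<Longrightarrow> dequiv st x y \<Longrightarrow> Tr p x \<in> U \<longleftrightarrow> Tr p y \<in> U"
  unfolding saturated_def by blast

lemma saturated_no_Tr: "(\<And>p x. Tr p x \<notin> U) \<Longrightarrow> saturated st U"
  unfolding saturated_def by auto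

lemma saturated_Tr_class: "saturated st (Tr p ` {z. dequiv st x z})"
  unfolding saturated_def by (auto intro: dequiv.trans dequiv.sym)

lemma saturated_seq_pre:
  assumes "saturated st U"
  shows "saturated st (seq_pre f U)"
  unfolding saturated_def using saturatedD[OF assms dequiv.cong_Seq[OF _ dequiv.refl]] by simp

lemma outc_set_eqI:
  assumes "Acc \<in> A \<longleftrightarrow> Acc \<in> B" "Rej \<in> A \<longleftrightarrow> Rej \<in> B"
    "\<And>v. Rv v \<in> A \<longleftrightarrow> Rv v \<in> B" "\<And>p x. Tr p x \<in> A \<longleftrightarrow> Tr p x \<in> B"
  shows "A = B"
proof (rule set_eqI)
  fix x
  show "x \<in> A \<longleftrightarrow> x \<in> B"
    using assms by (cases x) auto
qed

lemma seq_pre_cong: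
  assumes "saturated st U" "dequiv st f g"
  shows "seq_pre f U = seq_pre g U"
  using saturatedD[OF assms(1) dequiv.cong_Seq[OF dequiv.refl assms(2)]]
  by (intro outc_set_eqI) simp_all

lemma seq_pre_One: "saturated st U \<Longrightarrow> seq_pre (Tst BOne) U = U - {Acc}"
  by (rule outc_set_eqI) (auto dest: saturatedD[OF _ dequiv.base[OF gequiv.S1b]])

lemma seq_pre_seq_pre: "saturated st U \<Longrightarrow> seq_pre e (seq_pre f U) = seq_pre (Seq e f) U"
  by (rule outc_set_eqI) (auto dest: saturatedD[OF _ dequiv.base[OF gequiv.S2]])

lemma mass_equivD: "mass_equiv st e f \<Longrightarrow> saturated st U \<Longrightarrow> mass (der st e a) U = mass (der st f a) U"
  by (simp add: mass_equiv_def)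

lemma mass_equiv_refl: "mass_equiv st e e"
  by (simp add: mass_equiv_def)

lemma mass_equiv_sym: "mass_equiv st e f \<Longrightarrow> mass_equiv st f e"
  by (simp add: mass_equiv_def)

lemma mass_equiv_trans: "mass_equiv st e f \<Longrightarrow> mass_equiv st f g \<Longrightarrow> mass_equiv st e g"
  by (simp add: mass_equiv_def)

lemma mass_equiv_GChoice:
  "mass_equiv st e e' \<Longrightarrow> mass_equiv st f f' \<Longrightarrow> mass_equiv st (GChoice e b f) (GChoice e' b f')"
  by (simp add: mass_equiv_def)

lemma mass_equiv_WChoice:
  "mass_equiv st e e' \<Longrightarrow> mass_equiv st f f' \<Longrightarrow> mass_equiv st (WChoice e r s f) (WChoice e' r s f')"
  by (simp add: mass_equiv_def)

lemma mass_equiv_Seq: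
  fixes e :: "('t::finite, 'p, 'v, 's::{semiring_0,monoid_mult}) exp"
  assumes "mass_equiv st e e'" "mass_equiv st f f'" "dequiv st f f'"
  shows "mass_equiv st (Seq e f) (Seq e' f')"
  unfolding mass_equiv_def
proof (intro allI impI)
  fix a and U :: "('t, 'p, 'v, 's) outcome set"
  assume U: "saturated st U"
  then show "mass (der st (Seq e f) a) U = mass (der st (Seq e' f') a) U"
    using seq_pre_cong[OF U assms(3)] mass_equivD[OF assms(1) saturated_seq_pre]
      mass_equivD[OF assms(1) saturated_no_Tr, of "{Acc}"] mass_equivD[OF assms(2) U]
    by simp
qed

lemma mass_equiv_Loop:
  fixes e :: "('t::finite, 'p, 'v, 's::{semiring_0,monoid_mult}) exp"
  assumes "mass_equiv st e e'" "dequiv st (Loop e b) (Loop e' b)"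
  shows "mass_equiv st (Loop e b) (Loop e' b)"
  unfolding mass_equiv_def
proof (intro allI impI)
  fix a and U :: "('t, 'p, 'v, 's) outcome set"
  assume U: "saturated st U"
  then show "mass (der st (Loop e b) a) U = mass (der st (Loop e' b) a) U"
    using seq_pre_cong[OF U assms(2)] mass_equivD[OF assms(1) saturated_seq_pre]
      mass_equivD[OF assms(1) saturated_no_Tr, of "{Acc}"]
    by simp
qed

lemma mass_equiv_S1b:
  fixes e :: "('t::finite, 'p, 'v, 's::{semiring_0,monoid_mult}) exp"
  shows "mass_equiv st e (Seq e (Tst BOne))"
  unfolding mass_equiv_def
proof (intro allI impI)
  fix a and U :: "('t, 'p, 'v, 's) outcome set"
  assume "saturated st U"
  then have "mass (der st (Seq e (Tst BOne)) a) U =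
      (if Acc \<in> U then der st e a Acc else 0) + mass (der st e a) (U - {Acc})"
    by (simp add: seq_pre_One mass_singleton)
  then show "mass (der st e a) U = mass (der st (Seq e (Tst BOne)) a) U"
    by (simp add: mass_remove[OF fin_supp_der, symmetric])
qed

lemma mass_equiv_S2:
  fixes e :: "('t::finite, 'p, 'v, 's::{semiring_0,monoid_mult}) exp"
  shows "mass_equiv st (Seq (Seq e f) g) (Seq e (Seq f g))"
  unfolding mass_equiv_def
proof (intro allI impI)
  fix a and U :: "('t, 'p, 'v, 's) outcome set"
  assume "saturated st U"
  then have "seq_pre f (seq_pre g U) = seq_pre (Seq f g) U"
    by (rule seq_pre_seq_pre)
  then show "mass (der st (Seq (Seq e f) g) a) U = mass (der st (Seq e (Seq f g)) a) U"
    by (simp add: distrib_left mult.assoc add.assoc)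
qed

lemma mass_equiv_ba_Loop:
  fixes e :: "('t::finite, 'p, 'v, 's::{semiring_0,monoid_mult}) exp"
  assumes "ba_equiv b c"
  shows "mass_equiv st (Loop e b) (Loop e c)"
  unfolding mass_equiv_def
proof (intro allI impI)
  fix a and U :: "('t, 'p, 'v, 's) outcome set"
  assume "saturated st U"
  moreover have "dequiv st (Loop e b) (Loop e c)"
    using assms by (intro dequiv.base gequiv.ba_Loop)
  ultimately have "seq_pre (Loop e b) U = seq_pre (Loop e c) U"
    by (rule seq_pre_cong)
  then show "mass (der st (Loop e b) a) U = mass (der st (Loop e c) a) U"
    using assms by (simp add: ba_equiv_def)
qed

lemma mass_equiv_L1:
  fixes e :: "('t::finite, 'p, 'v, 's::{semiring_0,monoid_mult}) exp"
  assumes "conway st"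
  shows "mass_equiv st (Loop e b) (GChoice (Seq e (Loop e b)) b (Tst BOne))"
  unfolding mass_equiv_def
proof (intro allI impI)
  fix a and U :: "('t, 'p, 'v, 's) outcome set"
  define A where "A = mass (der st e a) {Acc}"
  define X where "X = mass (der st e a) (seq_pre (Loop e b) U)"
  have "st A * X = A * (st A * X) + X"
    by (subst conway_unfold[OF assms]) (simp add: distrib_right mult.assoc add.commute)
  then show "mass (der st (Loop e b) a) U = mass (der st (GChoice (Seq e (Loop e b)) b (Tst BOne)) a) U"
    by (simp add: A_def X_def)
qed

lemma mass_equiv_L2:
  fixes e :: "('t::finite, 'p, 'v, 's::{semiring_0,monoid_mult}) exp"
  assumes cw: "conway st" and body: "mass_equiv st e (GChoice (WChoice f r s (Tst BOne)) c g)"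
  shows "mass_equiv st (Seq (Tst c) (Loop e b))
    (Seq (Tst c) (GChoice (Seq (odot (st s * r)) (Seq f (Loop e b))) b (Tst BOne)))"
  unfolding mass_equiv_def
proof (intro allI impI)
  fix a and U :: "('t, 'p, 'v, 's) outcome set"
  assume U: "saturated st U"
  show "mass (der st (Seq (Tst c) (Loop e b)) a) U =
    mass (der st (Seq (Tst c) (GChoice (Seq (odot (st s * r)) (Seq f (Loop e b))) b (Tst BOne))) a) U"
  proof (cases "beval a c \<and> beval a b")
    case True
    define P where "P = seq_pre (Loop e b) U"
    define Af where "Af = mass (der st f a) {Acc}"
    define M where "M = mass (der st f a) P"
    have "mass (der st e a) {Acc} = r * Af + s"
      using mass_equivD[OF body saturated_no_Tr, of "{Acc}"] True by (simp add: Af_def)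
    moreover have "mass (der st e a) P = r * M"
      using mass_equivD[OF body saturated_seq_pre[OF U]] True by (simp add: M_def P_def)
    moreover have "st (r * Af + s) * (r * M) = st s * r * (Af * (st (r * Af + s) * (r * M)) + M)"
      by (subst (1) conway_plus[OF cw, of s "r * Af", unfolded add.commute[of s]])
        (simp add: distrib_left distrib_right mult.assoc add.commute)
    moreover have "Acc \<notin> P"
      by (simp add: P_def)
    ultimately show ?thesis
      using True by (simp add: P_def[symmetric] Af_def[symmetric] M_def[symmetric] mult.assoc)
  qed auto
qed

lemma mass_equiv_F1:
  fixes e :: "('t::finite, 'p, 'v, 's::{semiring_0,monoid_mult}) exp"
  assumes cw: "conway st" and eqn: "mass_equiv st g (GChoice (Seq e g) b f)"
    and Ef: "\<forall>a. Ef e a = 0" and d: "dequiv st g (Seq (Loop e b) f)"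
  shows "mass_equiv st g (Seq (Loop e b) f)"
  unfolding mass_equiv_def
proof (intro allI impI)
  fix a and U :: "('t, 'p, 'v, 's) outcome set"
  assume U: "saturated st U"
  have e0: "mass (der st e a) {Acc} = 0"
    using Ef by (simp add: mass_der_Acc_eq_Ef)
  have "seq_pre (Loop e b) (seq_pre f U) = seq_pre g U"
    using seq_pre_seq_pre[OF U] seq_pre_cong[OF U dequiv.sym[OF d]] by simp
  then have "mass (der st (Seq (Loop e b) f) a) U = mass (der st (GChoice (Seq e g) b f) a) U"
    using e0 by (simp add: conway_zero[OF cw])
  then show "mass (der st g a) U = mass (der st (Seq (Loop e b) f) a) U"
    using mass_equivD[OF eqn U, of a] by simp
qed

lemma gequiv_imp_mass_equiv:
  assumes "gequiv st e f" "conway st"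
  shows "mass_equiv st e f"
  using assms(1)
proof (induction rule: gequiv.induct)
  case (cong_Seq e e' f f')
  then show ?case
    by (blast intro: mass_equiv_Seq dequiv.base)
next
  case (cong_Loop e e' b)
  then show ?case
    by (blast intro: mass_equiv_Loop dequiv.base gequiv.cong_Loop)
next
  case (ba_Loop b c e)
  then show ?case
    by (rule mass_equiv_ba_Loop)
next
  case (S1b e)
  show ?case
    by (rule mass_equiv_S1b)
next
  case (S2 e f g)
  show ?case
    by (rule mass_equiv_S2)
next
  case (L1 e b)
  show ?case
    using assms(2) by (rule mass_equiv_L1)
next
  case (L2 e f r s c g b)
  then show ?case
    using assms(2) by (blast intro: mass_equiv_L2)
next
  case (F1 g e b f)
  then show ?case
    using assms(2) by (blast intro: mass_equiv_F1 dequiv.base gequiv.F1)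
qed (auto simp: mass_equiv_def ba_equiv_def algebra_simps)

text \<open>Salomaa guardedness is what makes unique solutions sound: a prefix that never accepts
  only sees the dequiv-class of what follows it, never its masses.\<close>

lemma mass_equiv_Seq_guarded:
  fixes g :: "('t::finite, 'p, 'v, 's::{semiring_0,monoid_mult}) exp"
  assumes "\<forall>a. Ef g a = 0" "dequiv st u w"
  shows "mass_equiv st (Seq g u) (Seq g w)"
  unfolding mass_equiv_def
proof (intro allI impI)
  fix a and U :: "('t, 'p, 'v, 's) outcome set"
  assume "saturated st U"
  then have "seq_pre u U = seq_pre w U"
    using assms(2) by (rule seq_pre_cong)
  then show "mass (der st (Seq g u) a) U = mass (der st (Seq g w) a) U"
    using assms(1) by (simp add: mass_der_Acc_eq_Ef)
qed

lemma mass_equiv_wsum_sub: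
  assumes "\<forall>rt\<in>set ws. \<forall>g y. snd rt = TVar g y \<longrightarrow> y \<in> X \<and> (\<forall>a. Ef g a = 0)"
    and "\<forall>y\<in>X. dequiv st (h y) (k y)"
  shows "mass_equiv st (wsum_sub h ws) (wsum_sub k ws)"
  using assms(1)
proof (induction ws)
  case (Cons rt ws)
  have "mass_equiv st (item_sub h (snd rt)) (item_sub k (snd rt))"
    using Cons.prems assms(2) by (cases "snd rt") (auto simp: mass_equiv_refl mass_equiv_Seq_guarded)
  then show ?case
    using Cons by (simp add: mass_equiv_WChoice)
qed (simp add: mass_equiv_refl)

lemma mass_equiv_term_sub:
  assumes "\<forall>aw\<in>set tm. \<forall>rt\<in>set (snd aw). \<forall>g y. snd rt = TVar g y \<longrightarrow> y \<in> X \<and> (\<forall>a. Ef g a = 0)"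
    and "\<forall>y\<in>X. dequiv st (h y) (k y)"
  shows "mass_equiv st (term_sub h tm) (term_sub k tm)"
  using assms(1)
proof (induction tm)
  case (Cons aw tm)
  then show ?case
    using mass_equiv_wsum_sub[OF _ assms(2), of "snd aw"] by (simp add: mass_equiv_GChoice)
qed (simp add: mass_equiv_refl)

lemma dequiv_imp_mass_equiv:
  assumes "dequiv st e f" "conway st"
  shows "mass_equiv st e f"
  using assms(1)
proof (induction rule: dequiv.induct)
  case (base e f)
  then show ?case
    using assms(2) by (rule gequiv_imp_mass_equiv)
next
  case (UA X \<tau> h k x)
  have "\<forall>y\<in>X. dequiv st (h y) (k y)"
    using UA dequiv.UA[of X \<tau> st h k] by blast
  moreover have "\<forall>aw\<in>set (\<tau> x). \<forall>rt\<in>set (snd aw). \<forall>g y. snd rt = TVar g y \<longrightarrow> y \<in> X \<and> (\<forall>a. Ef g a = 0)"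
    using UA unfolding salomaa_def is_system_def is_term_def by blast
  ultimately have "mass_equiv st (term_sub h (\<tau> x)) (term_sub k (\<tau> x))"
    by (intro mass_equiv_term_sub)
  then show ?case
    using UA by (blast intro: mass_equiv_trans mass_equiv_sym)
qed (blast intro: mass_equiv_refl mass_equiv_sym mass_equiv_trans mass_equiv_GChoice mass_equiv_WChoice
  mass_equiv_Seq mass_equiv_Loop dequiv.cong_Loop)+

section \<open>From masses to a bisimulation\<close>

lemma mass_equiv_transition_classes:
  fixes e :: "('t::finite, 'p, 'v, 's::{semiring_0,monoid_mult}) exp"
  assumes "mass_equiv st e f"
  shows "mass (\<lambda>u. der st e a (Tr p u)) {z. dequiv st x z} = mass (\<lambda>w. der st f a (Tr p w)) {z. dequiv st x z}"
  using mass_equivD[OF assms saturated_Tr_class] by (simp add: mass_image inj_def o_def)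

lemma equivp_dequiv: "equivp (dequiv st)"
  by (intro equivpI reflpI sympI transpI) (blast intro: dequiv.refl dequiv.sym dequiv.trans)+

lemma fin_supp_der_Tr: "fin_supp (\<lambda>u. der st e a (Tr p u))"
  using fin_supp_comp_inj[OF fin_supp_der, of "Tr p"] by (simp add: inj_def o_def)

lemma dequiv_same_output:
  assumes "dequiv st e f" "conway st" "\<And>p x. z \<noteq> Tr p x"
  shows "der st e a z = der st f a z"
proof -
  have "saturated st {z}"
    using assms(3) by (intro saturated_no_Tr) auto
  then have "mass (der st e a) {z} = mass (der st f a) {z}"
    by (rule mass_equivD[OF dequiv_imp_mass_equiv[OF assms(1,2)]])
  then show ?thesis
    by (simp add: mass_singleton)
qed

lemma dequiv_transition_coupling:
  fixes e f :: "('t::finite, 'p, 'v, 's::{semiring_0,monoid_mult}) exp"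
  assumes "positive_sr TYPE('s)" "refinement_sr TYPE('s)" "conway st" "dequiv st e f"
  shows "\<exists>W. is_coupling (dequiv st) (\<lambda>u. der st e a (Tr p u)) (\<lambda>w. der st f a (Tr p w)) W"
  using assms(1,2) equivp_dequiv fin_supp_der_Tr fin_supp_der_Tr
    mass_equiv_transition_classes[OF dequiv_imp_mass_equiv[OF assms(4,3)]]
  by (rule coupling_exists)

theorem mainTheorem10:
  fixes st :: "'s::{semiring_0,monoid_mult} \<Rightarrow> 's"
    and e f :: "('t::finite, 'p, 'v, 's) exp"
  assumes "positive_sr TYPE('s)"
    and "refinement_sr TYPE('s)"
    and "conway st"
    and "dequiv st e f"
  shows "bisimilar st e f"
proof -
  let ?R = "{(x, y). dequiv st x y}"
  have "is_bisim UNIV (der st) UNIV (der st) ?R"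
  proof (rule is_bisim_of_couplings)
    fix x y a p
    assume "(x, y) \<in> ?R"
    then show "\<exists>W. is_coupling (\<lambda>u w. (u, w) \<in> ?R) (\<lambda>u. der st x a (Tr p u)) (\<lambda>w. der st y a (Tr p w)) W"
      using dequiv_transition_coupling[OF assms(1-3)] by simp
  qed (use assms(3) in \<open>auto simp: fin_supp_der dequiv_same_output\<close>)
  then show ?thesis
    using assms(4) unfolding bisimilar_def by blast
qed

end
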